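(* Let $d\ge3$, let $M\ge1$ be a real number, let $|\cdot|_v$ be an absolute value on $\overline{\mathbb Q}$, and let $\lambda,\alpha\in\overline{\mathbb Q}$. If $|\alpha|_v\ge|\lambda|_v/M\ge2M$, then for all integers $0\le n_0\le n$, $$\left|\frac{\log M_{n,v}}{d^n}-\frac{\log M_{n_0,v}}{d^{n_0}}\right|\le\frac{\log 2}{d^{n_0}(d-1)}.$$
   Context: Define $A_0=\alpha$, $B_0=1$, and for $n\ge0$, $A_{n+1}=A_n^d+\lambda B_n^d$, $B_{n+1}=A_nB_n^{d-1}$ (so $[A_n:B_n]$ is the $n$-th iterate of $\alpha$ under $z\mapsto(z^d+\lambda)/z$). Set $M_{n,v}=\max\{|A_n|_v,|B_n|_v\}$. *)

theory Defs
  imports Complex_Main "HOL-Computational_Algebra.Polynomial"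
begin

text \<open>An absolute value on the algebraic closure of Q, modelled as the algebraic
complex numbers (the field of complex numbers algebraic over Q).\<close>
definition abs_value_on_Qbar :: "(complex \<Rightarrow> real) \<Rightarrow> bool" where
  "abs_value_on_Qbar v \<longleftrightarrow>
     (\<forall>x. algebraic x \<longrightarrow> v x \<ge> 0) \<and>
     (\<forall>x. algebraic x \<longrightarrow> (v x = 0 \<longleftrightarrow> x = 0)) \<and>
     (\<forall>x y. algebraic x \<longrightarrow> algebraic y \<longrightarrow> v (x * y) = v x * v y) \<and>
     (\<forall>x y. algebraic x \<longrightarrow> algebraic y \<longrightarrow> v (x + y) \<le> v x + v y)"

fun AB :: "nat \<Rightarrow> complex \<Rightarrow> complex \<Rightarrow> nat \<Rightarrow> complex \<times> complex" where
  "AB d lam alpha 0 = (alpha, 1)"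
| "AB d lam alpha (Suc n) =
     (let (A, B) = AB d lam alpha n in (A ^ d + lam * B ^ d, A * B ^ (d - 1)))"

definition Mnv :: "(complex \<Rightarrow> real) \<Rightarrow> nat \<Rightarrow> complex \<Rightarrow> complex \<Rightarrow> nat \<Rightarrow> real" where
  "Mnv v d lam alpha n = max (v (fst (AB d lam alpha n))) (v (snd (AB d lam alpha n)))"

end

theory Submission imports Defs begin

text \<open>Starting in the region \<open>|A| \<ge> L |B|\<close> with \<open>L = |\<lambda>|/M\<close>, the orbit never leaves it:
there the term \<open>\<lambda> B\<^sup>d\<close> is at most half of \<open>A\<^sup>d\<close>, so \<open>|A\<^sub>n\<^sub>+\<^sub>1|\<close> is within a factor 2 of
\<open>|A\<^sub>n|\<^sup>d\<close> and \<open>M\<^sub>n = |A\<^sub>n|\<close>. Hence consecutive terms of \<open>log M\<^sub>n / d\<^sup>n\<close> differ by at most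
\<open>log 2 / d\<^sup>n\<^sup>+\<^sup>1\<close>, and summing the geometric tail gives the bound. Since \<open>|\<cdot>|\<^sub>v\<close> is only
an absolute value on algebraic numbers, we also need that these form a ring: the powers of
\<open>x + y\<close> and \<open>x y\<close> lie in the finite-dimensional \<open>\<rat>\<close>-span of the products \<open>x\<^sup>i y\<^sup>j\<close>.\<close>

definition rat_scale :: "rat \<Rightarrow> 'a::field_char_0 \<Rightarrow> 'a" where
  "rat_scale q z = of_rat q * z"

interpretation rat: vector_space "rat_scale :: rat \<Rightarrow> 'a::field_char_0 \<Rightarrow> 'a"
  by unfold_locales (auto simp: rat_scale_def algebra_simps of_rat_add of_rat_mult)

lemma rat_span_mult:
  fixes u w :: "'a::field_char_0"
  assumes "u \<in> rat.span S" "w \<in> rat.span R"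
  shows "u * w \<in> rat.span {s * r |s r. s \<in> S \<and> r \<in> R}"
proof -
  let ?SR = "{s * r |s r. s \<in> S \<and> r \<in> R}"
  have left: "s * w \<in> rat.span ?SR" if "s \<in> S" for s
    using assms(2)
  proof (induction w rule: rat.span_induct_alt)
    case base then show ?case by (simp add: rat.span_zero)
  next
    case (step c x y)
    have "s * (rat_scale c x + y) = rat_scale c (s * x) + s * y"
      by (simp add: rat_scale_def algebra_simps)
    moreover have "s * x \<in> rat.span ?SR" using step that by (blast intro: rat.span_base)
    ultimately show ?case using step by (simp add: rat.span_add rat.span_scale)
  qed
  show ?thesis using assms(1)
  proof (induction u rule: rat.span_induct_alt)
    case base then show ?case by (simp add: rat.span_zero)
  next
    case (step c x y)
    have "(rat_scale c x + y) * w = rat_scale c (x * w) + y * w"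
      by (simp add: rat_scale_def algebra_simps)
    then show ?case using step left by (simp add: rat.span_add rat.span_scale)
  qed
qed

lemma algebraic_powers_in_rat_span:
  fixes x :: "'a::field_char_0"
  assumes "algebraic x"
  obtains m where "\<And>k. x ^ k \<in> rat.span ((\<lambda>i. x ^ i) ` {..<m})"
proof -
  obtain p where p_rat: "\<forall>i. coeff p i \<in> \<rat>" and "p \<noteq> 0" and "poly p x = 0"
    using assms unfolding algebraic_altdef by blast
  have "\<forall>i. \<exists>q. coeff p i = of_rat q" using p_rat by (metis Rats_cases)
  then obtain r where r: "\<And>i. coeff p i = of_rat (r i)" by metis
  define m where "m = degree p"
  have "r m \<noteq> 0" using \<open>p \<noteq> 0\<close> r[of m] unfolding m_def by (metis leading_coeff_0_iff of_rat_0)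
  let ?B = "(\<lambda>i. x ^ i) ` {..<m}"
  have x_m: "x ^ m = (\<Sum>i<m. rat_scale (- r i / r m) (x ^ i))"
  proof -
    have "0 = (\<Sum>i\<le>m. coeff p i * x ^ i)" using \<open>poly p x = 0\<close> by (simp add: poly_altdef m_def)
    also have "\<dots> = (\<Sum>i<m. coeff p i * x ^ i) + coeff p m * x ^ m"
      by (simp add: lessThan_Suc_atMost[symmetric])
    finally have "of_rat (r m) * x ^ m = - (\<Sum>i<m. of_rat (r i) * x ^ i)"
      by (simp add: r eq_neg_iff_add_eq_0 add.commute)
    then have "x ^ m = - (\<Sum>i<m. of_rat (r i) * x ^ i) / of_rat (r m)"
      using \<open>r m \<noteq> 0\<close> by (simp add: field_simps)
    also have "\<dots> = (\<Sum>i<m. rat_scale (- r i / r m) (x ^ i))"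
      by (simp add: rat_scale_def sum_divide_distrib sum_negf of_rat_divide of_rat_minus)
    finally show ?thesis .
  qed
  have "x ^ k \<in> rat.span ?B" for k
  proof (induction k rule: less_induct)
    case (less k)
    show ?case
    proof (cases "k < m")
      case True then show ?thesis by (blast intro: rat.span_base)
    next
      case False
      have "x ^ k = x ^ (k - m) * x ^ m" using False by (simp add: power_add[symmetric])
      also have "\<dots> = (\<Sum>i<m. rat_scale (- r i / r m) (x ^ (k - m + i)))"
        by (simp add: x_m sum_distrib_left rat_scale_def power_add algebra_simps)
      also have "\<dots> \<in> rat.span ?B"
        using False less by (intro rat.span_sum rat.span_scale) auto
      finally show ?thesis .
    qed
  qed
  then show ?thesis using that by blast
qed

lemma algebraic_if_powers_in_rat_span:
  fixes z :: "'a::field_char_0"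
  assumes "finite T" and span: "\<And>k. z ^ k \<in> rat.span T"
  shows "algebraic z"
proof (cases "inj_on (\<lambda>k. z ^ k) {..card T}")
  case False
  then obtain i j where "z ^ i = z ^ j" "i \<noteq> j" unfolding inj_on_def by blast
  let ?p = "monom (1::'a) i - monom 1 j"
  have "?p \<noteq> 0" using \<open>i \<noteq> j\<close> by (metis coeff_monom eq_iff_diff_eq_0 one_neq_zero)
  moreover have "poly ?p z = 0" using \<open>z ^ i = z ^ j\<close> by (simp add: poly_monom)
  ultimately show ?thesis by (intro algebraicI'[of ?p]) (auto simp: coeff_monom)
next
  case True
  let ?P = "(\<lambda>k. z ^ k) ` {..card T}"
  have "rat.dependent ?P"
  proof (rule ccontr)
    assume "rat.independent ?P"
    have "rat.dim ?P = card ?P" using rat.dim_eq_card_independent[OF \<open>rat.independent ?P\<close>] .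
    also have "\<dots> = Suc (card T)" using True by (simp add: card_image)
    finally have "rat.dim ?P = Suc (card T)" .
    moreover have "rat.dim ?P \<le> card T" using rat.dim_le_card[OF _ \<open>finite T\<close>] span by blast
    ultimately show False by simp
  qed
  then obtain t u where t: "finite t" "t \<subseteq> ?P" and sum_0: "(\<Sum>w\<in>t. rat_scale (u w) w) = 0"
     and "\<exists>w\<in>t. u w \<noteq> 0"
    unfolding rat.dependent_explicit by blast
  have "\<forall>w\<in>t. \<exists>k. w = z ^ k" using t(2) by blast
  then obtain g where g: "\<And>w. w \<in> t \<Longrightarrow> w = z ^ g w" by metis
  have "inj_on g t" by (metis g inj_onI)
  define p where "p = (\<Sum>w\<in>t. monom (of_rat (u w) :: 'a) (g w))"
  have coeff_p: "coeff p k = (\<Sum>w\<in>t. if g w = k then of_rat (u w) else 0)" for k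
    by (simp add: p_def coeff_sum coeff_monom)
  have "\<forall>k. coeff p k \<in> \<rat>" unfolding coeff_p by (auto intro!: Rats_sum)
  moreover have "poly p z = 0"
  proof -
    have "poly p z = (\<Sum>w\<in>t. of_rat (u w) * z ^ g w)" by (simp add: p_def poly_sum poly_monom)
    also have "\<dots> = (\<Sum>w\<in>t. rat_scale (u w) w)" using g by (auto simp: rat_scale_def intro!: sum.cong)
    finally show ?thesis using sum_0 by simp
  qed
  moreover have "p \<noteq> 0"
  proof
    assume "p = 0"
    obtain w where w: "w \<in> t" "u w \<noteq> 0" using \<open>\<exists>w\<in>t. u w \<noteq> 0\<close> by blast
    have "coeff p (g w) = (\<Sum>w'\<in>t. if w' = w then of_rat (u w') else 0)"
      unfolding coeff_p using \<open>inj_on g t\<close> w(1) by (intro sum.cong) (auto dest: inj_onD)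
    also have "\<dots> = of_rat (u w)" using t(1) w(1) by simp
    finally show False using \<open>p = 0\<close> w(2) by simp
  qed
  ultimately show ?thesis unfolding algebraic_altdef by blast
qed

lemma algebraic_add_mult:
  fixes x y :: "'a::field_char_0"
  assumes "algebraic x" "algebraic y"
  shows algebraic_add: "algebraic (x + y)" and algebraic_mult: "algebraic (x * y)"
proof -
  obtain m where m: "\<And>k. x ^ k \<in> rat.span ((\<lambda>i. x ^ i) ` {..<m})"
    using algebraic_powers_in_rat_span[OF assms(1)] by blast
  obtain n where n: "\<And>k. y ^ k \<in> rat.span ((\<lambda>i. y ^ i) ` {..<n})"
    using algebraic_powers_in_rat_span[OF assms(2)] by blast
  define T where "T = {s * r |s r. s \<in> (\<lambda>i. x ^ i) ` {..<m} \<and> r \<in> (\<lambda>i. y ^ i) ` {..<n}}"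
  have "finite T"
    unfolding T_def by (rule finite_image_set2) auto
  have monomial: "x ^ i * y ^ j \<in> rat.span T" for i j
    unfolding T_def by (rule rat_span_mult[OF m n])
  have "(x + y) ^ k \<in> rat.span T" for k
  proof -
    have "(x + y) ^ k = (\<Sum>i\<le>k. rat_scale (of_nat (k choose i)) (x ^ i * y ^ (k - i)))"
      by (simp add: binomial_ring rat_scale_def algebra_simps)
    also have "\<dots> \<in> rat.span T" by (intro rat.span_sum rat.span_scale monomial)
    finally show ?thesis .
  qed
  then show "algebraic (x + y)" by (rule algebraic_if_powers_in_rat_span[OF \<open>finite T\<close>])
  have "(x * y) ^ k \<in> rat.span T" for k using monomial by (simp add: power_mult_distrib)
  then show "algebraic (x * y)" by (rule algebraic_if_powers_in_rat_span[OF \<open>finite T\<close>])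
qed

lemma algebraic_power: "algebraic x \<Longrightarrow> algebraic (x ^ k)"
  by (induction k) (auto simp: algebraic_mult rat_imp_algebraic)

lemma
  assumes "abs_value_on_Qbar v" and "algebraic x"
  shows abs_value_on_Qbar_nonneg: "v x \<ge> 0"
    and abs_value_on_Qbar_eq_0_iff: "v x = 0 \<longleftrightarrow> x = 0"
  using assms unfolding abs_value_on_Qbar_def by blast+

lemma
  assumes "abs_value_on_Qbar v" and "algebraic x" "algebraic y"
  shows abs_value_on_Qbar_mult: "v (x * y) = v x * v y"
    and abs_value_on_Qbar_triangle: "v (x + y) \<le> v x + v y"
  using assms unfolding abs_value_on_Qbar_def by blast+

lemma abs_value_on_Qbar_one:
  assumes "abs_value_on_Qbar v"
  shows "v 1 = 1"
proof -
  have "v 1 = v 1 * v 1" "v 1 \<noteq> 0"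
    using abs_value_on_Qbar_mult[OF assms, of 1 1] abs_value_on_Qbar_eq_0_iff[OF assms, of 1]
    by (simp_all add: rat_imp_algebraic)
  then show ?thesis by (metis mult_cancel_right1)
qed

lemma abs_value_on_Qbar_power:
  assumes "abs_value_on_Qbar v" "algebraic x"
  shows "v (x ^ k) = v x ^ k"
  using assms
  by (induction k) (simp_all add: abs_value_on_Qbar_one abs_value_on_Qbar_mult algebraic_power)

lemma abs_value_on_Qbar_minus:
  assumes "abs_value_on_Qbar v" "algebraic x"
  shows "v (- x) = v x"
proof -
  have alg_m1: "algebraic (-1 :: complex)" by (simp add: rat_imp_algebraic)
  have "v (-1) ^ 2 = 1"
    using abs_value_on_Qbar_power[OF assms(1) alg_m1, of 2] abs_value_on_Qbar_one[OF assms(1)]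
    by simp
  then have "v (-1) = 1"
    using abs_value_on_Qbar_nonneg[OF assms(1) alg_m1] by (auto simp: power2_eq_1_iff)
  then show ?thesis
    using abs_value_on_Qbar_mult[OF assms(1) alg_m1 assms(2)] by simp
qed

lemma abs_value_on_Qbar_diff_le:
  assumes "abs_value_on_Qbar v" "algebraic x" "algebraic y"
  shows "v x - v y \<le> v (x + y)"
proof -
  have "v x = v ((x + y) + - y)" by simp
  also have "\<dots> \<le> v (x + y) + v (- y)"
    using assms by (intro abs_value_on_Qbar_triangle) (auto intro: algebraic_add)
  finally show ?thesis using abs_value_on_Qbar_minus[OF assms(1,3)] by simp
qed

lemma AB_Suc:
  "fst (AB d lam alpha (Suc n)) = fst (AB d lam alpha n) ^ d + lam * snd (AB d lam alpha n) ^ d"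
  "snd (AB d lam alpha (Suc n)) = fst (AB d lam alpha n) * snd (AB d lam alpha n) ^ (d - 1)"
  by (simp_all add: split_beta Let_def)

lemma dominant_power_bounds:
  fixes A B L :: real
  assumes "d \<ge> 3" "L \<ge> 2" "B > 0" "A \<ge> L * B"
  shows "2 * L * (A * B ^ (d - 1)) \<le> A ^ d" and "2 * L\<^sup>2 * B ^ d \<le> A ^ d"
proof -
  have d_1: "d - 1 = Suc (d - 2)" using assms(1) by simp
  have "L ^ 1 \<le> L ^ (d - 2)"
    using assms(1,2) by (intro power_increasing) auto
  then have "2 \<le> L ^ (d - 2)" using assms(2) by simp
  then have "2 * L * B ^ (d - 1) \<le> L ^ (d - 2) * L * B ^ (d - 1)"
    using assms(2,3) by (intro mult_right_mono) auto
  also have "\<dots> = (L * B) ^ (d - 1)"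
    unfolding d_1 power_Suc2 power_mult_distrib by (simp only: ac_simps)
  also have "\<dots> \<le> A ^ (d - 1)"
    using assms(2-4) by (intro power_mono) auto
  finally have key: "2 * L * B ^ (d - 1) \<le> A ^ (d - 1)" .
  have A_d: "A ^ d = A * A ^ (d - 1)" and B_d: "B ^ d = B * B ^ (d - 1)"
    using assms(1) by (simp_all add: power_Suc[symmetric])
  have "A \<ge> 0" using assms(2-4) by (smt (verit) mult_pos_pos)
  then show "2 * L * (A * B ^ (d - 1)) \<le> A ^ d"
    using mult_left_mono[OF key \<open>A \<ge> 0\<close>] by (simp add: A_d algebra_simps)
  have "2 * L\<^sup>2 * B ^ d = (L * B) * (2 * L * B ^ (d - 1))"
    by (simp add: B_d power2_eq_square algebra_simps)
  also have "\<dots> \<le> A * A ^ (d - 1)"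
    using key assms(2,3,4) \<open>A \<ge> 0\<close> by (intro mult_mono) auto
  finally show "2 * L\<^sup>2 * B ^ d \<le> A ^ d" by (simp add: A_d)
qed

lemma abs_ln_diff_le_ln2:
  fixes x y :: real
  assumes "x > 0" "x / 2 \<le> y" "y \<le> 2 * x"
  shows "\<bar>ln y - ln x\<bar> \<le> ln 2"
proof -
  have "y > 0" using assms by simp
  have "ln y \<le> ln (2 * x)" using assms \<open>y > 0\<close> by simp
  moreover have "ln (x / 2) \<le> ln y" using assms by simp
  ultimately have "ln y \<le> ln 2 + ln x" "ln x - ln 2 \<le> ln y"
    using \<open>x > 0\<close> by (simp_all add: ln_mult ln_div)
  then show ?thesis by linarith
qed

lemma telescoping_geometric_bound:
  fixes f :: "nat \<Rightarrow> real"
  assumes "q > 1" and step: "\<And>n. \<bar>f (Suc n) - f n\<bar> \<le> c / q ^ Suc n" and "n0 \<le> n"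
  shows "\<bar>f n - f n0\<bar> \<le> c / (q ^ n0 * (q - 1))"
proof -
  have "0 \<le> c / q ^ Suc 0" using step[of 0] by (meson abs_ge_zero order_trans)
  then have "c \<ge> 0" using \<open>q > 1\<close> by (simp add: zero_le_divide_iff)
  have "\<bar>f n - f n0\<bar> \<le> c / (q - 1) * (1 / q ^ n0 - 1 / q ^ n)"
    using \<open>n0 \<le> n\<close>
  proof (induction n rule: dec_induct)
    case base then show ?case by simp
  next
    case (step n)
    have "\<bar>f (Suc n) - f n0\<bar> \<le> \<bar>f (Suc n) - f n\<bar> + \<bar>f n - f n0\<bar>" by linarith
    also have "\<dots> \<le> c / q ^ Suc n + c / (q - 1) * (1 / q ^ n0 - 1 / q ^ n)"
      using assms(2) step.IH by (intro add_mono) auto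
    also have "\<dots> = c / (q - 1) * (1 / q ^ n0 - 1 / q ^ Suc n)"
      using \<open>q > 1\<close> by (simp add: field_simps)
    finally show ?case .
  qed
  also have "\<dots> \<le> c / (q - 1) * (1 / q ^ n0)"
    using \<open>c \<ge> 0\<close> \<open>q > 1\<close> by (intro mult_left_mono) auto
  finally show ?thesis by (simp add: mult.commute)
qed

locale escaping_orbit =
  fixes v :: "complex \<Rightarrow> real" and d :: nat and M :: real and lam alpha :: complex
  assumes d: "d \<ge> 3" and M: "M \<ge> 1" and v: "abs_value_on_Qbar v"
    and alg_lam: "algebraic lam" and alg_alpha: "algebraic alpha"
    and alpha_large: "v alpha \<ge> v lam / M" and lam_large: "v lam / M \<ge> 2 * M"
begin

abbreviation A where "A n \<equiv> fst (AB d lam alpha n)"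
abbreviation B where "B n \<equiv> snd (AB d lam alpha n)"

definition L where "L = v lam / M"

lemma L_ge_2: "L \<ge> 2" and L_ge_M: "L \<ge> M"
  using lam_large M unfolding L_def by linarith+

lemma algebraic_AB: "algebraic (A n)" "algebraic (B n)"
  by (induction n) (simp_all add: AB_Suc alg_alpha alg_lam algebraic_add algebraic_mult
      algebraic_power rat_imp_algebraic del: AB.simps(2))

lemma AB_step:
  assumes "B n \<noteq> 0" and escape: "v (A n) \<ge> L * v (B n)"
  shows "v (A n) ^ d / 2 \<le> v (A (Suc n))" and "v (A (Suc n)) \<le> 2 * v (A n) ^ d"
    and "L * v (B (Suc n)) \<le> v (A n) ^ d / 2" and "B (Suc n) \<noteq> 0"
proof -
  note alg_A = algebraic_AB(1)[of n] and alg_B = algebraic_AB(2)[of n]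
  have B_pos: "v (B n) > 0"
    using assms(1) abs_value_on_Qbar_nonneg[OF v alg_B] abs_value_on_Qbar_eq_0_iff[OF v alg_B]
    by linarith
  note bounds = dominant_power_bounds[OF d L_ge_2 B_pos escape]
  have alg_terms: "algebraic (A n ^ d)" "algebraic (lam * B n ^ d)"
    using alg_A alg_B alg_lam by (simp_all add: algebraic_power algebraic_mult)
  have v_A_d: "v (A n ^ d) = v (A n) ^ d"
    by (rule abs_value_on_Qbar_power[OF v alg_A])
  have "v (lam * B n ^ d) = M * L * v (B n) ^ d"
    using M abs_value_on_Qbar_mult[OF v alg_lam algebraic_power[OF alg_B]]
      abs_value_on_Qbar_power[OF v alg_B]
    by (simp add: L_def)
  also have "\<dots> \<le> L\<^sup>2 * v (B n) ^ d"
    using L_ge_M L_ge_2 B_pos by (intro mult_right_mono) (auto simp: power2_eq_square)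
  finally have v_lam_term: "v (lam * B n ^ d) \<le> v (A n) ^ d / 2"
    using bounds(2) by simp
  show "v (A n) ^ d / 2 \<le> v (A (Suc n))"
    using abs_value_on_Qbar_diff_le[OF v alg_terms] v_lam_term v_A_d
    unfolding AB_Suc by linarith
  show "v (A (Suc n)) \<le> 2 * v (A n) ^ d"
    using abs_value_on_Qbar_triangle[OF v alg_terms] v_lam_term v_A_d
      abs_value_on_Qbar_nonneg[OF v alg_terms(1)]
    unfolding AB_Suc by linarith
  have "v (B (Suc n)) = v (A n) * v (B n) ^ (d - 1)"
    unfolding AB_Suc
    using abs_value_on_Qbar_mult[OF v alg_A algebraic_power[OF alg_B]]
      abs_value_on_Qbar_power[OF v alg_B]
    by simp
  then show "L * v (B (Suc n)) \<le> v (A n) ^ d / 2"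
    using bounds(1) by simp
  have "v (A n) > 0"
    using escape B_pos L_ge_2 by (smt (verit) mult_pos_pos)
  then have "A n \<noteq> 0" using abs_value_on_Qbar_eq_0_iff[OF v alg_A] by auto
  then show "B (Suc n) \<noteq> 0" using assms(1) unfolding AB_Suc by simp
qed

lemma escape_invariant: "B n \<noteq> 0 \<and> v (A n) \<ge> L * v (B n)"
proof (induction n)
  case 0 then show ?case
    using alpha_large by (simp add: abs_value_on_Qbar_one[OF v] L_def)
next
  case (Suc n) then show ?case using AB_step[of n] by fastforce
qed

lemma B_pos: "v (B n) > 0"
  using escape_invariant[of n] abs_value_on_Qbar_nonneg[OF v algebraic_AB(2)[of n]]
    abs_value_on_Qbar_eq_0_iff[OF v algebraic_AB(2)[of n]]
  by linarith

lemma A_pos: "v (A n) > 0"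
  using escape_invariant[of n] B_pos[of n] L_ge_2 by (smt (verit) mult_pos_pos)

lemma Mnv_eq_abs_A: "Mnv v d lam alpha n = v (A n)"
proof -
  have "v (B n) \<le> L * v (B n)"
    using B_pos[of n] L_ge_2 by simp
  then show ?thesis using escape_invariant[of n] by (simp add: Mnv_def)
qed

lemma ln_Mnv_step:
  "\<bar>ln (Mnv v d lam alpha (Suc n)) / real d ^ Suc n - ln (Mnv v d lam alpha n) / real d ^ n\<bar>
     \<le> ln 2 / real d ^ Suc n"
proof -
  have "\<bar>ln (v (A (Suc n))) - ln (v (A n) ^ d)\<bar> \<le> ln 2"
    using A_pos AB_step escape_invariant by (intro abs_ln_diff_le_ln2) auto
  moreover have "ln (Mnv v d lam alpha n) / real d ^ n
      = ln (v (A n) ^ d) / real d ^ Suc n"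
    using A_pos d by (simp add: Mnv_eq_abs_A ln_realpow)
  ultimately show ?thesis
    using d by (simp add: Mnv_eq_abs_A diff_divide_distrib[symmetric] abs_div divide_right_mono)
qed

end

theorem proposition5p6:
  fixes d :: nat and M :: real and v :: "complex \<Rightarrow> real" and lam alpha :: complex
  assumes "d \<ge> 3" and "M \<ge> 1"
    and "abs_value_on_Qbar v"
    and "algebraic lam" and "algebraic alpha"
    and "v alpha \<ge> v lam / M" and "v lam / M \<ge> 2 * M"
  shows "\<forall>n0 n. n0 \<le> n \<longrightarrow>
    \<bar>ln (Mnv v d lam alpha n) / real d ^ n - ln (Mnv v d lam alpha n0) / real d ^ n0\<bar>
      \<le> ln 2 / (real d ^ n0 * (real d - 1))"
proof (intro allI impI)
  fix n0 n :: nat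
  assume "n0 \<le> n"
  interpret escaping_orbit v d M lam alpha
    using assms by unfold_locales
  show "\<bar>ln (Mnv v d lam alpha n) / real d ^ n - ln (Mnv v d lam alpha n0) / real d ^ n0\<bar>
      \<le> ln 2 / (real d ^ n0 * (real d - 1))"
    using assms(1) ln_Mnv_step \<open>n0 \<le> n\<close>
    by (intro telescoping_geometric_bound[where f = "\<lambda>n. ln (Mnv v d lam alpha n) / real d ^ n"]) auto
qed

end
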